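(* Let $(|B(\lambda)\rangle,\mathcal{M})$ be an $N$-regular quantum scenario. Then the $N$ measurement angles in $M_1$ are evenly spaced modulo $\pi$ with adjacent angles differing by $\frac{\pi}{N}$, and likewise for $M_2$. Consequently, up to equivalence, $M_1=\{\frac{k\pi}{N}:k=0,\dots,N-1\}$ and $M_2=\{\frac{k\pi}{N}+\mu \bmod \pi:k=0,\dots,N-1\}$ for some $\mu\in[0,\pi)$.
   Context: $\equiv$ is equality modulo $2\pi$; $\oplus$ is addition mod 2. For $\varphi\in\mathbb{R}$, $E_\varphi=\cos\varphi X+\sin\varphi Y$, with $+1$ eigenvector $|\varphi\rangle=\frac{1}{\sqrt2}(|0\rangle+e^{i\varphi}|1\rangle)$ and $-1$ eigenvector $|\varphi+\pi\rangle$; outcomes $+1,-1$ relabelled $0,1$; measurements identified with angles. A measurement scenario $\mathcal{M}=(M_1,M_2,M_3)$ consists of finite sets $M_i\subseteq[0,\pi)$ of angles for qubit $i$. For a three-qubit state $|\psi\rangle$, the event $(A,B,C)\to(a,b,c)$ is impossible if $(\langle A+a\pi|\otimes\langle B+b\pi|\otimes\langle C+c\pi|)|\psi\rangle=0$. Equivalence: $(|\psi\rangle,\mathcal{M})$ and $(|\psi'\rangle,\mathcal{M}')$ are equivalent if, after possibly permuting qubit labels, there is a local unitary $U=U_1\otimes U_2\otimes U_3$ with $U|\psi\rangle=|\psi'\rangle$ and $\{\varphi'\bmod\pi: U_iE_\varphi U_i^\dagger=\pm E_{\varphi'},\varphi\in M_i\}=M'_i$ for each $i$. For $\lambda\in[0,\frac{\pi}{2})$,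 $|v_\lambda\rangle=\cos\frac{\lambda}{2}|0\rangle+\sin\frac{\lambda}{2}|1\rangle$, $|w_\lambda\rangle=\sin\frac{\lambda}{2}|0\rangle+\cos\frac{\lambda}{2}|1\rangle$, $|B(\lambda)\rangle=\frac{1}{\sqrt2}(|00\rangle|v_\lambda\rangle+|11\rangle|w_\lambda\rangle)$. Define modulo $2\pi$: $\beta(\lambda,\varphi)=\varphi-2\arctan\left(\frac{\cos\frac{\lambda}{2}\sin\varphi}{\sin\frac{\lambda}{2}+\cos\frac{\lambda}{2}\cos\varphi}\right)$. For $|B(\lambda)\rangle$, $(A,B,C)\to(a,b,c)$ is impossible iff $A+B\equiv\beta(\lambda,C+c\pi)+(1\oplus a\oplus b)\pi$. $(|B(\lambda)\rangle,\mathcal{M})$ is maximally impossible if for every $C\in M_3$ and $z\in\{0,1\}$: every $A\in M_1$ admits $B\in M_2$, $a,b$ with $(A,B,C)\to(a,b,z)$ impossible, and every $B\in M_2$ admits $A\in M_1$, $a,b$ with $(A,B,C)\to(a,b,z)$ impossible. Then $|M_1|=|M_2|=:N$; write $M_1=\{A_0,\dots,A_{N-1}\}$, $M_2=\{B_0,\dots,B_{N-1}\}$, $M_3=\{C_0,\dots,C_{n-1}\}$; for each $(j,l,z)$ there is a unique $k=:K(j,l,z)$ with $A_j+B_k-\beta(\lambda,C_l+z\pi)$ an integer multiple of $\pi$, and $r(j,l,z)\in\{0,1\}$ is defined by $A_j+B_{K(j,l,z)}-\beta(\lambda,C_l+z\pi)\equiv r(j,l,z)\pi$. $\Psi_l(z)$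 is the $\mathbb{Z}_2$-linear system $\{a_j\oplus b_{K(j,l,z)}=r(j,l,z):j=0,\dots,N-1\}$ in unknowns $a_0,\dots,a_{N-1},b_0,\dots,b_{N-1}$. With $n=2$, maximal rank means for all $z_0,z_1$ the coefficient matrix of $\Psi_0(z_0)\cup\Psi_1(z_1)$ has rank $2N-1$ over $\mathbb{Z}_2$. $N$-regular: maximally impossible and of maximal rank, with $|M_1|=|M_2|=N$ and $M_3=\{C_0,C_1\}$. *)

theory Defs
  imports "HOL-Analysis.Analysis" "HOL-Library.Z2" "Jordan_Normal_Form.DL_Rank"
begin

definition rmod :: "real \<Rightarrow> real \<Rightarrow> real" where
  "rmod x p = x - p * of_int \<lfloor>x / p\<rfloor>"

text \<open>outcome bit (False = 0 = +1, True = 1 = -1) as angle shift\<close>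
definition obit :: "bool \<Rightarrow> real" where
  "obit a = (if a then pi else 0)"

definition ket_ang :: "real \<Rightarrow> bool \<Rightarrow> complex" where
  "ket_ang phi x = (if x then cis phi else 1) / complex_of_real (sqrt 2)"

text \<open>E_phi = cos phi X + sin phi Y, entries (row, column)\<close>
definition Emat :: "real \<Rightarrow> bool \<Rightarrow> bool \<Rightarrow> complex" where
  "Emat phi x y = (if x = y then 0 else if x then cis phi else cis (- phi))"

definition unitary2 :: "(bool \<Rightarrow> bool \<Rightarrow> complex) \<Rightarrow> bool" where
  "unitary2 U \<longleftrightarrow> (\<forall>i j. (\<Sum>k\<in>UNIV. cnj (U k i) * U k j) = (if i = j then 1 else 0))"

definition conjop :: "(bool \<Rightarrow> bool \<Rightarrow> complex) \<Rightarrow> (bool \<Rightarrow> bool \<Rightarrow> complex) \<Rightarrow> bool \<Rightarrow> bool \<Rightarrow> complex" where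
  "conjop U E x y = (\<Sum>k\<in>UNIV. \<Sum>l\<in>UNIV. U x k * E k l * cnj (U y l))"

definition angle_image :: "(bool \<Rightarrow> bool \<Rightarrow> complex) \<Rightarrow> real set \<Rightarrow> real set" where
  "angle_image U M = {rmod phi' pi | phi phi'. phi \<in> M \<and>
      (conjop U (Emat phi) = Emat phi' \<or> conjop U (Emat phi) = (\<lambda>x y. - Emat phi' x y))}"

type_synonym state3 = "bool \<Rightarrow> bool \<Rightarrow> bool \<Rightarrow> complex"

definition impossible :: "state3 \<Rightarrow> real \<Rightarrow> real \<Rightarrow> real \<Rightarrow> bool \<Rightarrow> bool \<Rightarrow> bool \<Rightarrow> bool" where
  "impossible psi A B C a b c \<longleftrightarrow>
     (\<Sum>x\<in>UNIV. \<Sum>y\<in>UNIV. \<Sum>z\<in>UNIV.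
        cnj (ket_ang (A + obit a) x) * cnj (ket_ang (B + obit b) y) * cnj (ket_ang (C + obit c) z)
        * psi x y z) = 0"

definition vlam :: "real \<Rightarrow> bool \<Rightarrow> complex" where
  "vlam lam z = (if z then complex_of_real (sin (lam / 2)) else complex_of_real (cos (lam / 2)))"

definition wlam :: "real \<Rightarrow> bool \<Rightarrow> complex" where
  "wlam lam z = (if z then complex_of_real (cos (lam / 2)) else complex_of_real (sin (lam / 2)))"

definition Bstate :: "real \<Rightarrow> state3" where
  "Bstate lam x y z =
     (if x = y then (if x then wlam lam z else vlam lam z) / complex_of_real (sqrt 2) else 0)"

text \<open>beta(lambda, phi); when the denominator vanishes the arctan is +-pi/2,
  and 2 arctan = +-pi, which agree modulo 2 pi; we pick pi.\<close>
definition beta :: "real \<Rightarrow> real \<Rightarrow> real" where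
  "beta lam phi =
     (let den = sin (lam / 2) + cos (lam / 2) * cos phi in
      if den = 0 then phi - pi
      else phi - 2 * arctan (cos (lam / 2) * sin phi / den))"

definition meas_scenario :: "real set \<Rightarrow> real set \<Rightarrow> real set \<Rightarrow> bool" where
  "meas_scenario M1 M2 M3 \<longleftrightarrow>
     (\<forall>M \<in> {M1, M2, M3}. finite M \<and> M \<subseteq> {0..<pi})"

definition max_impossible :: "real \<Rightarrow> real set \<Rightarrow> real set \<Rightarrow> real set \<Rightarrow> bool" where
  "max_impossible lam M1 M2 M3 \<longleftrightarrow>
     (\<forall>C\<in>M3. \<forall>z.
        (\<forall>A\<in>M1. \<exists>B\<in>M2. \<exists>a b. impossible (Bstate lam) A B C a b z) \<and>
        (\<forall>B\<in>M2. \<exists>A\<in>M1. \<exists>a b. impossible (Bstate lam) A B C a b z))"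

definition Kidx :: "real \<Rightarrow> nat \<Rightarrow> (nat \<Rightarrow> real) \<Rightarrow> (nat \<Rightarrow> real) \<Rightarrow> (nat \<Rightarrow> real)
                    \<Rightarrow> nat \<Rightarrow> nat \<Rightarrow> bool \<Rightarrow> nat" where
  "Kidx lam N As Bs Cs j l z =
     (THE k. k < N \<and> (\<exists>m::int. As j + Bs k - beta lam (Cs l + obit z) = pi * of_int m))"

text \<open>Coefficient matrix of Psi_0(z0) union Psi_1(z1) over Z_2: row l*N + j is the
  equation a_j + b_{K(j,l,z_l)} = r; column c < N is a_c, column N + k is b_k.\<close>
definition coeff_mat :: "real \<Rightarrow> nat \<Rightarrow> (nat \<Rightarrow> real) \<Rightarrow> (nat \<Rightarrow> real) \<Rightarrow> (nat \<Rightarrow> real)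
                         \<Rightarrow> bool \<Rightarrow> bool \<Rightarrow> bit mat" where
  "coeff_mat lam N As Bs Cs z0 z1 =
     mat (2 * N) (2 * N) (\<lambda>(r, c).
        let l = r div N; j = r mod N; zl = (if l = 0 then z0 else z1) in
        if c = j \<or> c = N + Kidx lam N As Bs Cs j l zl then 1 else 0)"

definition max_rank :: "real \<Rightarrow> nat \<Rightarrow> (nat \<Rightarrow> real) \<Rightarrow> (nat \<Rightarrow> real) \<Rightarrow> (nat \<Rightarrow> real) \<Rightarrow> bool" where
  "max_rank lam N As Bs Cs \<longleftrightarrow>
     (\<forall>z0 z1. vec_space.rank (2 * N) (coeff_mat lam N As Bs Cs z0 z1) = 2 * N - 1)"

definition N_regular :: "nat \<Rightarrow> real \<Rightarrow> real set \<Rightarrow> real set \<Rightarrow> real set \<Rightarrow> bool" where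
  "N_regular N lam M1 M2 M3 \<longleftrightarrow>
     0 \<le> lam \<and> lam < pi / 2 \<and> meas_scenario M1 M2 M3 \<and>
     max_impossible lam M1 M2 M3 \<and>
     card M1 = N \<and> card M2 = N \<and> card M3 = 2 \<and>
     (\<exists>As Bs Cs. bij_betw As {..<N} M1 \<and> bij_betw Bs {..<N} M2 \<and> bij_betw Cs {..<2} M3 \<and>
        max_rank lam N As Bs Cs)"

definition scen :: "real set \<Rightarrow> real set \<Rightarrow> real set \<Rightarrow> nat \<Rightarrow> real set" where
  "scen M1 M2 M3 i = (if i = 0 then M1 else if i = 1 then M2 else M3)"

text \<open>relabel qubits by a permutation p of {0,1,2}: old qubit j becomes new qubit p j\<close>
definition relabel :: "(nat \<Rightarrow> nat) \<Rightarrow> state3 \<Rightarrow> state3" where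
  "relabel p psi x0 x1 x2 = (let x = (\<lambda>i. [x0, x1, x2] ! i) in psi (x (p 0)) (x (p 1)) (x (p 2)))"

definition apply3 :: "(bool \<Rightarrow> bool \<Rightarrow> complex) \<Rightarrow> (bool \<Rightarrow> bool \<Rightarrow> complex) \<Rightarrow> (bool \<Rightarrow> bool \<Rightarrow> complex)
                      \<Rightarrow> state3 \<Rightarrow> state3" where
  "apply3 U1 U2 U3 psi x y z =
     (\<Sum>x'\<in>UNIV. \<Sum>y'\<in>UNIV. \<Sum>z'\<in>UNIV. U1 x x' * U2 y y' * U3 z z' * psi x' y' z')"

definition equivalent :: "state3 \<Rightarrow> (nat \<Rightarrow> real set) \<Rightarrow> state3 \<Rightarrow> (nat \<Rightarrow> real set) \<Rightarrow> bool" where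
  "equivalent psi M psi' M' \<longleftrightarrow>
     (\<exists>p U. p permutes {0, 1, 2} \<and> (\<forall>i<3. unitary2 (U i)) \<and>
        apply3 (U 0) (U 1) (U 2) (relabel p psi) = psi' \<and>
        (\<forall>i<3. angle_image (U i) (M (inv_into UNIV p i)) = M' i))"

definition evenly_spaced :: "nat \<Rightarrow> real set \<Rightarrow> bool" where
  "evenly_spaced N M \<longleftrightarrow> (\<exists>theta. M = (\<lambda>k. rmod (theta + real k * pi / real N) pi) ` {..<N})"

end

theory Submission
  imports Defs
begin

text \<open>
  An event is impossible for B(\<lambda>) only if A + B \<equiv> \<beta>(\<lambda>, C + c\<pi>) (mod \<pi>). As the angles of
  a qubit are distinct modulo \<pi>, maximal impossibility yields, for each of the two angles C_l
  of qubit 3, a permutation K_l of the indices with A_j + B_(K_l j) \<equiv> \<gamma>_l := \<beta>(\<lambda>, C_l).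
  Summing over j gives N (\<gamma>_1 - \<gamma>_0) \<equiv> 0, and K_0 i = K_1 j forces A_j \<equiv> A_i + (\<gamma>_1 - \<gamma>_0).
  The indices j with A_j \<equiv> A_0 + n (\<gamma>_1 - \<gamma>_0) for some n form a set S with K_0 S = K_1 S.
  If S were proper, the columns of the coefficient matrix belonging to a_j (j \<in> S) and to
  b_k (k \<in> K_0 S) would sum to zero over Z_2, and so would the remaining columns, so the rank
  would be at most 2N - 2. Hence all A_j lie in A_0 + (\<pi>/N) Z modulo \<pi>, and N distinct such
  angles in [0, \<pi>) are evenly spaced; the B_k follow from B_(K_0 j) \<equiv> \<gamma>_0 - A_j.
  Finally, the local unitary diag(1, e^(-i\<theta>)) \<otimes> diag(1, e^(i\<theta>)) \<otimes> 1 fixes B(\<lambda>) and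
  rotates the angles of qubits 1 and 2 by -\<theta> and \<theta>.
\<close>

section \<open>Congruence modulo a period\<close>

definition int_multiple :: "real \<Rightarrow> real \<Rightarrow> bool" where
  "int_multiple p x \<longleftrightarrow> (\<exists>m::int. x = p * of_int m)"

lemma int_multiple_of_int [simp]: "int_multiple p (p * of_int m)"
  unfolding int_multiple_def by blast

lemma int_multiple_0 [simp]: "int_multiple p 0"
  using int_multiple_of_int[of p 0] by simp

lemma int_multiple_add: "int_multiple p x \<Longrightarrow> int_multiple p y \<Longrightarrow> int_multiple p (x + y)"
  unfolding int_multiple_def by (metis distrib_left of_int_add)

lemma int_multiple_diff: "int_multiple p x \<Longrightarrow> int_multiple p y \<Longrightarrow> int_multiple p (x - y)"
  unfolding int_multiple_def by (metis right_diff_distrib of_int_diff)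

lemma int_multiple_sum: "(\<And>i. i \<in> S \<Longrightarrow> int_multiple p (f i)) \<Longrightarrow> int_multiple p (\<Sum>i\<in>S. f i)"
proof (induction S rule: infinite_finite_induct)
  case (insert i S)
  then show ?case by (simp add: int_multiple_add)
qed simp_all

lemma rmod_bounds:
  assumes "p > 0"
  shows "0 \<le> rmod x p" and "rmod x p < p"
proof -
  have "rmod x p = p * frac (x / p)"
    unfolding rmod_def frac_def using assms by (simp add: algebra_simps)
  then show "0 \<le> rmod x p" "rmod x p < p"
    using assms frac_ge_0[of "x / p"] frac_lt_1[of "x / p"] by simp_all
qed

lemma rmod_eq_self: "0 \<le> x \<Longrightarrow> x < p \<Longrightarrow> rmod x p = x"
  unfolding rmod_def by (simp add: floor_eq_iff)

lemma int_multiple_rmod_diff: "int_multiple p (rmod x p - x)"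
  unfolding rmod_def using int_multiple_of_int[of p "- \<lfloor>x / p\<rfloor>"] by simp

lemma rmod_eq_iff:
  assumes "p > 0"
  shows "rmod x p = rmod y p \<longleftrightarrow> int_multiple p (x - y)"
proof
  assume "rmod x p = rmod y p"
  then have "x - y = p * of_int (\<lfloor>x / p\<rfloor> - \<lfloor>y / p\<rfloor>)"
    unfolding rmod_def by (simp add: algebra_simps)
  then show "int_multiple p (x - y)" unfolding int_multiple_def by blast
next
  assume "int_multiple p (x - y)"
  then obtain m :: int where "x = y + p * of_int m"
    unfolding int_multiple_def by (auto simp: algebra_simps)
  moreover have "(y + p * of_int m) / p = y / p + of_int m"
    using assms by (simp add: field_simps)
  ultimately show "rmod x p = rmod y p"
    unfolding rmod_def by (simp add: algebra_simps)
qed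

lemma rmod_rmod_add: "p > 0 \<Longrightarrow> rmod (rmod x p + y) p = rmod (x + y) p"
  using int_multiple_rmod_diff[of p x] by (simp add: rmod_eq_iff)

lemma eq_if_int_multiple_diff:
  assumes "0 \<le> x" "x < p" "0 \<le> y" "y < p" and "int_multiple p (x - y)"
  shows "x = y"
  using assms rmod_eq_iff[of p x y] rmod_eq_self[of x p] rmod_eq_self[of y p] by simp

lemma evenly_spaced_if_int_multiple:
  assumes "0 < N" "finite X" "card X = N" "X \<subseteq> {0..<pi}"
    and grid: "\<And>x. x \<in> X \<Longrightarrow> \<exists>k::int. int_multiple pi (x - \<theta> - of_int k * pi / real N)"
  shows "evenly_spaced N X"
proof -
  let ?f = "\<lambda>k. rmod (\<theta> + real k * pi / real N) pi"
  have "X \<subseteq> ?f ` {..<N}"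
  proof
    fix x assume x: "x \<in> X"
    obtain k :: int where k: "int_multiple pi (x - \<theta> - of_int k * pi / real N)"
      using grid[OF x] by blast
    define q where "q = k div int N"
    define r where "r = nat (k mod int N)"
    have "0 \<le> k mod int N" "k mod int N < int N" using assms(1) by simp_all
    then have r: "r < N" "int r = k mod int N" unfolding r_def by simp_all
    then have "k = int r + int N * q" unfolding q_def by simp
    then have kq: "of_int k = real r + real N * of_int q"
      by (metis of_int_add of_int_mult of_int_of_nat_eq)
    have "int_multiple pi ((x - \<theta> - of_int k * pi / real N) + pi * of_int q)"
      by (rule int_multiple_add[OF k]) simp
    also have "(x - \<theta> - of_int k * pi / real N) + pi * of_int q = x - (\<theta> + real r * pi / real N)"
      unfolding kq using assms(1) by (simp add: field_simps)
    finally have "int_multiple pi (x - (\<theta> + real r * pi / real N))" .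
    then have "x = ?f r"
      using x assms(4) rmod_eq_iff[of pi x] rmod_eq_self[of x pi] by auto
    with r(1) show "x \<in> ?f ` {..<N}" by blast
  qed
  moreover have "card (?f ` {..<N}) \<le> card X"
    using assms(3) card_image_le[of "{..<N}" ?f] by simp
  ultimately have "X = ?f ` {..<N}" by (intro card_seteq) auto
  then show ?thesis unfolding evenly_spaced_def by blast
qed

section \<open>Impossible events of B(\<lambda>)\<close>

lemma sum_UNIV_bool: "(\<Sum>x\<in>UNIV. f x) = f False + f True"
  by (simp add: UNIV_bool add.commute)

lemma sin_eq_0_imp_int_multiple: "sin x = 0 \<Longrightarrow> int_multiple pi x"
  unfolding int_multiple_def by (auto simp: sin_zero_iff_int2 mult.commute)

lemma sin_cos_double_arctan:
  fixes x y :: real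
  assumes "x \<noteq> 0"
  shows "sin (2 * arctan (y / x)) = 2 * x * y / (x\<^sup>2 + y\<^sup>2)"
    and "cos (2 * arctan (y / x)) = (x\<^sup>2 - y\<^sup>2) / (x\<^sup>2 + y\<^sup>2)"
proof -
  define q where "q = y / x"
  have sq: "sqrt (1 + q\<^sup>2) * sqrt (1 + q\<^sup>2) = (x\<^sup>2 + y\<^sup>2) / x\<^sup>2"
    unfolding q_def using assms by (simp add: add_pos_nonneg field_simps power2_eq_square)
  have "sin (2 * arctan q) = 2 * q / (sqrt (1 + q\<^sup>2) * sqrt (1 + q\<^sup>2))"
    unfolding sin_double sin_arctan cos_arctan by simp
  also have "\<dots> = 2 * x * y / (x\<^sup>2 + y\<^sup>2)"
    unfolding sq unfolding q_def using assms by (simp add: power2_eq_square)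
  finally show "sin (2 * arctan (y / x)) = 2 * x * y / (x\<^sup>2 + y\<^sup>2)"
    unfolding q_def .
  have "cos (2 * arctan q) = (1 - q\<^sup>2) / (sqrt (1 + q\<^sup>2) * sqrt (1 + q\<^sup>2))"
    unfolding cos_double sin_arctan cos_arctan by (simp add: power_divide diff_divide_distrib)
  also have "1 - q\<^sup>2 = (x\<^sup>2 - y\<^sup>2) / x\<^sup>2"
    unfolding q_def using assms by (simp add: field_simps power2_eq_square)
  also have "(x\<^sup>2 - y\<^sup>2) / x\<^sup>2 / (sqrt (1 + q\<^sup>2) * sqrt (1 + q\<^sup>2)) = (x\<^sup>2 - y\<^sup>2) / (x\<^sup>2 + y\<^sup>2)"
    unfolding sq using assms by simp
  finally show "cos (2 * arctan (y / x)) = (x\<^sup>2 - y\<^sup>2) / (x\<^sup>2 + y\<^sup>2)"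
    unfolding q_def .
qed

lemma impossible_Bstate_iff:
  "impossible (Bstate lam) A B C a b z \<longleftrightarrow>
    complex_of_real (cos (lam / 2)) + complex_of_real (sin (lam / 2)) * cis (- (C + obit z))
     + cis (- (A + obit a + (B + obit b))) *
       (complex_of_real (sin (lam / 2)) + complex_of_real (cos (lam / 2)) * cis (- (C + obit z))) = 0"
proof -
  define c where "c = complex_of_real (cos (lam / 2))"
  define s where "s = complex_of_real (sin (lam / 2))"
  define r where "r = complex_of_real (sqrt 2)"
  have "cnj r = r" "r \<noteq> 0" unfolding r_def by simp_all
  have "(\<Sum>x\<in>UNIV. \<Sum>y\<in>UNIV. \<Sum>w\<in>UNIV.
        cnj (ket_ang (A + obit a) x) * cnj (ket_ang (B + obit b) y) * cnj (ket_ang (C + obit z) w)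
        * Bstate lam x y w) =
     (c + s * cis (- (C + obit z)) + cis (- (A + obit a + (B + obit b))) * (s + c * cis (- (C + obit z))))
       / (r * r * r * r)"
    unfolding sum_UNIV_bool ket_ang_def Bstate_def vlam_def wlam_def
      c_def[symmetric] s_def[symmetric] r_def[symmetric]
    using \<open>cnj r = r\<close>
    by (simp add: cis_cnj, simp only: cis_mult[symmetric] add_divide_distrib ring_distribs,
        simp add: algebra_simps)
  then show ?thesis
    unfolding impossible_def c_def s_def using \<open>r \<noteq> 0\<close> by simp
qed

lemma phase_equation_re_im:
  fixes c s t D :: real
  assumes "complex_of_real c + complex_of_real s * cis (- t)
      + cis (- D) * (complex_of_real s + complex_of_real c * cis (- t)) = 0"
  defines "x \<equiv> s + c * cos t" and "y \<equiv> c * sin t" and "\<phi> \<equiv> t - D"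
  shows "x + cos \<phi> * x + sin \<phi> * y = 0" and "y + sin \<phi> * x - cos \<phi> * y = 0"
proof -
  have "cis t * (complex_of_real c + complex_of_real s * cis (- t)
      + cis (- D) * (complex_of_real s + complex_of_real c * cis (- t)))
    = (complex_of_real s + complex_of_real c * cis t)
      + cis \<phi> * (complex_of_real s + complex_of_real c * cis (- t))"
    unfolding \<phi>_def by (simp add: algebra_simps cis_divide[symmetric] cis_inverse[symmetric] field_simps)
  with assms(1) have "(complex_of_real s + complex_of_real c * cis t)
      + cis \<phi> * (complex_of_real s + complex_of_real c * cis (- t)) = 0"
    by simp
  from arg_cong[OF this, of Re] arg_cong[OF this, of Im]
  show "x + cos \<phi> * x + sin \<phi> * y = 0" and "y + sin \<phi> * x - cos \<phi> * y = 0"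
    unfolding x_def y_def by (simp_all add: algebra_simps)
qed

text \<open>
  The real and imaginary parts above say w + cis \<phi> * cnj w = 0 for w = x + iy = s + c cis t,
  so \<phi> \<equiv> 2 arg w + \<pi> (mod 2\<pi>) and D \<equiv> t - 2 arctan (y / x) (mod \<pi>).
\<close>

lemma phase_equation_imp_int_multiple:
  fixes c s t D :: real
  assumes "0 < c" "0 \<le> s" "s \<noteq> c"
    and eq: "complex_of_real c + complex_of_real s * cis (- t)
      + cis (- D) * (complex_of_real s + complex_of_real c * cis (- t)) = 0"
  shows "int_multiple pi (D - (if s + c * cos t = 0 then t - pi
    else t - 2 * arctan (c * sin t / (s + c * cos t))))"
proof -
  define x where "x = s + c * cos t"
  define y where "y = c * sin t"
  define \<phi> where "\<phi> = t - D"
  have re: "x + cos \<phi> * x + sin \<phi> * y = 0" and im: "y + sin \<phi> * x - cos \<phi> * y = 0"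
    using phase_equation_re_im[OF eq] unfolding x_def y_def \<phi>_def by simp_all
  show ?thesis
  proof (cases "x = 0")
    case True
    have "y \<noteq> 0"
    proof
      assume "y = 0"
      then have "sin t = 0" using \<open>0 < c\<close> unfolding y_def by simp
      then have "cos t = 1 \<or> cos t = -1" using sin_cos_squared_add[of t] by (simp add: power2_eq_1_iff)
      then show False using True assms(1-3) unfolding x_def by auto
    qed
    with re True have "sin (D - (t - pi)) = 0" unfolding \<phi>_def by (simp add: sin_diff mult.commute)
    then show ?thesis using True unfolding x_def by (simp add: sin_eq_0_imp_int_multiple)
  next
    case False
    define u where "u = arctan (y / x)"
    have "sin (2 * u - \<phi>) = (2 * x * y * cos \<phi> - (x\<^sup>2 - y\<^sup>2) * sin \<phi>) / (x\<^sup>2 + y\<^sup>2)"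
      unfolding sin_diff u_def sin_cos_double_arctan[OF False]
      by (simp only: times_divide_eq_left diff_divide_distrib[symmetric])
    also have "2 * x * y * cos \<phi> - (x\<^sup>2 - y\<^sup>2) * sin \<phi>
        = y * (x + cos \<phi> * x + sin \<phi> * y) - x * (y + sin \<phi> * x - cos \<phi> * y)"
      by (simp add: algebra_simps power2_eq_square)
    finally have "sin (2 * u - \<phi>) = 0"
      using re im by simp
    moreover have "D - (t - 2 * arctan (c * sin t / (s + c * cos t))) = 2 * u - \<phi>"
      unfolding u_def \<phi>_def x_def y_def by simp
    ultimately show ?thesis using False unfolding x_def by (simp add: sin_eq_0_imp_int_multiple)
  qed
qed

lemma int_multiple_obit: "int_multiple pi (obit a)"
  unfolding obit_def int_multiple_def by (auto intro: exI[of _ 1] exI[of _ 0])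

lemma impossible_Bstate_imp_int_multiple:
  assumes "0 \<le> lam" "lam < pi / 2" and "impossible (Bstate lam) A B C a b z"
  shows "int_multiple pi (A + B - beta lam (C + obit z))"
proof -
  have "0 < cos (lam / 2)" "0 \<le> sin (lam / 2)"
    using assms(1,2) by (auto intro!: cos_gt_zero_pi sin_ge_zero)
  moreover have "sin (lam / 2) \<noteq> cos (lam / 2)"
  proof -
    have "0 < cos (lam / 2 + pi / 4)"
      using assms(1,2) by (intro cos_gt_zero_pi) auto
    then show ?thesis
      by (simp add: cos_add cos_45 sin_45 algebra_simps)
  qed
  ultimately have "int_multiple pi (A + obit a + (B + obit b) - beta lam (C + obit z))"
    using phase_equation_imp_int_multiple assms(3)
    unfolding impossible_Bstate_iff beta_def Let_def by blast
  moreover have "int_multiple pi (obit a + obit b)"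
    by (intro int_multiple_add int_multiple_obit)
  ultimately have "int_multiple pi
      ((A + obit a + (B + obit b) - beta lam (C + obit z)) - (obit a + obit b))"
    by (rule int_multiple_diff)
  then show ?thesis by (simp add: algebra_simps)
qed

section \<open>Rank bounds\<close>

context vec_space
begin

lemma rank_le_card_if_cols_in_span:
  assumes A: "A \<in> carrier_mat n nc" and W: "W \<subseteq> carrier_vec n" "finite W"
    and cols: "set (cols A) \<subseteq> span W"
  shows "rank A \<le> card W"
proof -
  obtain S where S: "maximal S (\<lambda>T. T \<subseteq> set (cols A) \<and> lin_indpt T)"
    using maximal_exists[of "\<lambda>T. T \<subseteq> set (cols A) \<and> lin_indpt T" "card (set (cols A))" "{}"]
    by (meson List.finite_set card_mono empty_iff empty_subsetI finite_lin_indpt2 rev_finite_subset)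
  then have S_cols: "S \<subseteq> set (cols A)" and "lin_indpt S" by (simp_all add: maximal_def)
  moreover have "finite S" using S_cols List.finite_set rev_finite_subset by blast
  moreover have "S \<subseteq> span W" using S_cols cols by blast
  ultimately obtain C :: "'a vec set" where "int (card C) \<le> int (card W) - int (card S)"
    using replacement[OF _ W(2) W(1)] by blast
  then show ?thesis using rank_card_indpt[OF A S] by linarith
qed

lemma col_in_span_if_column_sum_zero:
  assumes A: "A \<in> carrier_mat n nc" and c0: "c0 < nc" "P c0"
    and sums: "\<And>r. r < n \<Longrightarrow> (\<Sum>c | c < nc \<and> P c. A $$ (r, c)) = 0"
  shows "col A c0 \<in> span (col A ` {c. c < nc \<and> P c \<and> c \<noteq> c0})"
proof -
  define others where "others = filter (\<lambda>c. P c \<and> c \<noteq> c0) [0..<nc]"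
  define W where "W = col A ` {c. c < nc \<and> P c \<and> c \<noteq> c0}"
  define vs where "vs = map (col A) others"
  have W: "W \<subseteq> carrier_vec n" unfolding W_def using A by auto
  have set_others: "set others = {c. c < nc \<and> P c \<and> c \<noteq> c0}"
    unfolding others_def by auto
  have vs_W: "v \<in> W" if "v \<in> set vs" for v
    using that unfolding vs_def W_def set_others[symmetric] by auto
  have vs_carrier: "v \<in> carrier_vec n" if "v \<in> set vs" for v
    using vs_W[OF that] W by auto
  have dim: "dim_vec (sumlist vs) = n"
    by (intro sumlist_dim vs_carrier)
  have "col A c0 = (- 1) \<cdot>\<^sub>v sumlist vs"
  proof (rule eq_vecI)
    fix r assume "r < dim_vec ((- 1) \<cdot>\<^sub>v sumlist vs)"
    then have r: "r < n" using dim by simp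
    have "sumlist vs $ r = sum_list (map (\<lambda>v. v $ r) vs)"
      using sumlist_vec_index[OF vs_carrier r] by simp
    also have "map (\<lambda>v. v $ r) vs = map (\<lambda>c. A $$ (r, c)) others"
      unfolding vs_def using A r by (simp add: set_others)
    also have "sum_list (map (\<lambda>c. A $$ (r, c)) others) = (\<Sum>c\<in>set others. A $$ (r, c))"
      by (rule sum_list_distinct_conv_sum_set) (simp add: others_def)
    finally have "sumlist vs $ r = (\<Sum>c\<in>set others. A $$ (r, c))" .
    moreover have "{c. c < nc \<and> P c} = insert c0 (set others)"
      using c0 unfolding set_others by auto
    moreover have "c0 \<notin> set others" unfolding set_others by simp
    ultimately have "A $$ (r, c0) + sumlist vs $ r = 0"
      using sums[OF r] by simp
    then have "A $$ (r, c0) = - (sumlist vs $ r)"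
      by (rule eq_neg_iff_add_eq_0[THEN iffD2])
    then show "col A c0 $ r = ((- 1) \<cdot>\<^sub>v sumlist vs) $ r"
      using A r c0 dim by simp
  qed (use A dim in simp)
  also have "\<dots> \<in> span W"
  proof (rule smult_in_span[OF W], rule sumlist_in_span[OF W])
    show "v \<in> span W" if "v \<in> set vs" for v
      using vs_W[OF that] in_own_span[OF W] by blast
  qed
  finally show ?thesis unfolding W_def .
qed

lemma rank_le_if_column_sums_zero:
  assumes A: "A \<in> carrier_mat n nc"
    and c1: "c1 < nc" "P c1" and c2: "c2 < nc" "\<not> P c2"
    and sums_P: "\<And>r. r < n \<Longrightarrow> (\<Sum>c | c < nc \<and> P c. A $$ (r, c)) = 0"
    and sums_not_P: "\<And>r. r < n \<Longrightarrow> (\<Sum>c | c < nc \<and> \<not> P c. A $$ (r, c)) = 0"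
  shows "rank A \<le> nc - 2"
proof -
  define W where "W = col A ` ({..<nc} - {c1, c2})"
  have W: "W \<subseteq> carrier_vec n" using A unfolding W_def by auto
  have "card W \<le> card ({..<nc} - {c1, c2})"
    unfolding W_def by (rule card_image_le) simp
  also have "\<dots> = nc - 2"
    using c1 c2 by (subst card_Diff_subset) (auto simp: card_insert_if)
  finally have card_W: "card W \<le> nc - 2" .
  have "col A c \<in> span W" if c: "c < nc" for c
  proof -
    consider "c = c1" | "c = c2" | "c \<in> {..<nc} - {c1, c2}" using c by auto
    then show ?thesis
    proof cases
      case 1
      have "col A ` {c. c < nc \<and> P c \<and> c \<noteq> c1} \<subseteq> W" using c2 unfolding W_def by auto
      then have "span (col A ` {c. c < nc \<and> P c \<and> c \<noteq> c1}) \<subseteq> span W"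
        by (rule span_is_monotone)
      then show ?thesis
        using col_in_span_if_column_sum_zero[OF A c1 sums_P] 1 by blast
    next
      case 2
      have "col A ` {c. c < nc \<and> \<not> P c \<and> c \<noteq> c2} \<subseteq> W" using c1 unfolding W_def by auto
      then have "span (col A ` {c. c < nc \<and> \<not> P c \<and> c \<noteq> c2}) \<subseteq> span W"
        by (rule span_is_monotone)
      then show ?thesis
        using col_in_span_if_column_sum_zero[OF A c2 sums_not_P] 2 by blast
    next
      case 3
      then have "col A c \<in> W" unfolding W_def by blast
      then show ?thesis using in_own_span[OF W] by blast
    qed
  qed
  then have "set (cols A) \<subseteq> span W" using A by (auto simp: cols_def)
  moreover have "finite W" unfolding W_def by simp
  ultimately have "rank A \<le> card W"
    by (intro rank_le_card_if_cols_in_span[OF A W])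
  with card_W show ?thesis by linarith
qed

end

lemma sum_pair_indicator_bit:
  fixes a b n :: nat
  assumes "a \<noteq> b" "a < n" "b < n" "P a \<longleftrightarrow> P b"
  shows "(\<Sum>c | c < n \<and> P c. if c = a \<or> c = b then (1::bit) else 0) = 0"
proof -
  have "finite {c. c < n \<and> P c}" by simp
  then have "(\<Sum>c | c < n \<and> P c. if c = a \<or> c = b then (1::bit) else 0)
      = (\<Sum>c \<in> {c. c < n \<and> P c} \<inter> {a, b}. 1)"
    by (subst sum.inter_restrict) (auto intro!: sum.cong)
  also have "\<dots> = 0"
  proof (cases "P a")
    case True
    then have "{c. c < n \<and> P c} \<inter> {a, b} = {a, b}" using assms by auto
    then show ?thesis using assms(1) by simp
  next
    case False
    then have "{c. c < n \<and> P c} \<inter> {a, b} = {}" using assms by auto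
    then show ?thesis by simp
  qed
  finally show ?thesis .
qed

definition pairing_mat :: "nat \<Rightarrow> (nat \<Rightarrow> nat \<Rightarrow> nat) \<Rightarrow> bit mat" where
  "pairing_mat N K = mat (2 * N) (2 * N) (\<lambda>(r, c).
     if c = r mod N \<or> c = N + K (r div N) (r mod N) then 1 else 0)"

lemma coeff_mat_eq_pairing_mat:
  "coeff_mat lam N As Bs Cs z0 z1
    = pairing_mat N (\<lambda>l j. Kidx lam N As Bs Cs j l (if l = 0 then z0 else z1))"
  unfolding coeff_mat_def pairing_mat_def by (simp add: Let_def)

lemma pairing_mat_rank_le:
  fixes K :: "nat \<Rightarrow> nat \<Rightarrow> nat"
  assumes K_less: "\<And>l j. l < 2 \<Longrightarrow> j < N \<Longrightarrow> K l j < N"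
    and K_inj: "\<And>l. l < 2 \<Longrightarrow> inj_on (K l) {..<N}"
    and S: "S \<subseteq> {..<N}" "i \<in> S" "j < N" "j \<notin> S"
    and K_S: "K 0 ` S = K 1 ` S"
  shows "vec_space.rank (2 * N) (pairing_mat N K) \<le> 2 * N - 2"
proof -
  \<comment> \<open>Every row has both or neither of its two ones in the columns marked by Q.\<close>
  define Q where "Q c \<longleftrightarrow> c < N \<and> c \<in> S \<or> N \<le> c \<and> c - N \<in> K 0 ` S" for c
  have Q_row: "Q (r mod N) \<longleftrightarrow> Q (N + K (r div N) (r mod N))" if "r < 2 * N" for r
  proof -
    have l: "r div N < 2" and j: "r mod N < N"
      using that S(3) by (auto simp: less_mult_imp_div_less mult.commute)
    have "K 0 ` S = K (r div N) ` S" using K_S l by (cases "r div N") auto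
    then have "K (r div N) (r mod N) \<in> K 0 ` S \<longleftrightarrow> r mod N \<in> S"
      using inj_on_image_mem_iff[OF K_inj[OF l] _ S(1)] j by simp
    then show ?thesis unfolding Q_def using j by simp
  qed
  have row_sum: "(\<Sum>c | c < 2 * N \<and> P c. pairing_mat N K $$ (r, c)) = 0"
    if r: "r < 2 * N" and P: "P = Q \<or> P = (\<lambda>c. \<not> Q c)" for r P
  proof -
    have l: "r div N < 2" and j: "r mod N < N"
      using r S(3) by (auto simp: less_mult_imp_div_less mult.commute)
    have "(\<Sum>c | c < 2 * N \<and> P c. pairing_mat N K $$ (r, c))
        = (\<Sum>c | c < 2 * N \<and> P c. if c = r mod N \<or> c = N + K (r div N) (r mod N) then 1 else 0)"
      using r unfolding pairing_mat_def by (intro sum.cong) auto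
    also have "\<dots> = 0"
    proof (rule sum_pair_indicator_bit)
      show "r mod N \<noteq> N + K (r div N) (r mod N)" "r mod N < 2 * N"
        "N + K (r div N) (r mod N) < 2 * N"
        using j K_less[OF l j] by linarith+
    qed (use Q_row[OF r] P in auto)
    finally show ?thesis .
  qed
  show ?thesis
  proof (rule vec_space.rank_le_if_column_sums_zero[where P = Q])
    show "pairing_mat N K \<in> carrier_mat (2 * N) (2 * N)" unfolding pairing_mat_def by simp
    show "i < 2 * N" "Q i" "j < 2 * N" "\<not> Q j" using S unfolding Q_def by auto
  qed (use row_sum in auto)
qed

section \<open>Pairings of angles\<close>

text \<open>
  As and Bs enumerate the angles of qubits 1 and 2, and \<gamma> l stands for \<beta>(\<lambda>, C_l), where
  C_0, C_1 are the angles of qubit 3.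
\<close>

locale angle_pairing =
  fixes N :: nat and As Bs \<gamma> :: "nat \<Rightarrow> real"
  assumes inj_As: "inj_on As {..<N}" and inj_Bs: "inj_on Bs {..<N}"
    and As_range: "\<And>j. j < N \<Longrightarrow> 0 \<le> As j \<and> As j < pi"
    and Bs_range: "\<And>k. k < N \<Longrightarrow> 0 \<le> Bs k \<and> Bs k < pi"
    and partner_exists: "\<And>j l. j < N \<Longrightarrow> l < 2 \<Longrightarrow> \<exists>k<N. int_multiple pi (As j + Bs k - \<gamma> l)"
begin

definition partner :: "nat \<Rightarrow> nat \<Rightarrow> nat" where
  "partner l j = (THE k. k < N \<and> int_multiple pi (As j + Bs k - \<gamma> l))"

lemma partner_unique:
  assumes "k < N" "k' < N"
    and "int_multiple pi (As j + Bs k - \<gamma> l)" "int_multiple pi (As j + Bs k' - \<gamma> l)"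
  shows "k = k'"
proof -
  have "int_multiple pi (Bs k - Bs k')"
    using int_multiple_diff[OF assms(3,4)] by simp
  then have "Bs k = Bs k'"
    using eq_if_int_multiple_diff Bs_range[OF assms(1)] Bs_range[OF assms(2)] by blast
  then show ?thesis
    using inj_Bs assms(1,2) by (auto dest: inj_onD)
qed

lemma
  assumes "j < N" "l < 2"
  shows partner_less: "partner l j < N"
    and int_multiple_partner: "int_multiple pi (As j + Bs (partner l j) - \<gamma> l)"
proof -
  have "\<exists>!k. k < N \<and> int_multiple pi (As j + Bs k - \<gamma> l)"
    using partner_exists[OF assms] partner_unique by blast
  from theI'[OF this]
  show "partner l j < N" "int_multiple pi (As j + Bs (partner l j) - \<gamma> l)"
    unfolding partner_def by blast+
qed

lemma inj_on_partner:
  assumes "l < 2"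
  shows "inj_on (partner l) {..<N}"
proof (rule inj_onI)
  fix i j assume ij: "i \<in> {..<N}" "j \<in> {..<N}" and eq: "partner l i = partner l j"
  have "int_multiple pi ((As i + Bs (partner l i) - \<gamma> l) - (As j + Bs (partner l j) - \<gamma> l))"
    using ij assms by (intro int_multiple_diff int_multiple_partner) auto
  then have "int_multiple pi (As i - As j)"
    using eq by simp
  then have "As i = As j"
    using eq_if_int_multiple_diff As_range ij by blast
  then show "i = j"
    using inj_As ij by (auto dest: inj_onD)
qed

lemma partner_image: "l < 2 \<Longrightarrow> partner l ` {..<N} = {..<N}"
  using partner_less inj_on_partner by (intro endo_inj_surj) auto

lemma int_multiple_N_mult_gamma_diff: "int_multiple pi (real N * (\<gamma> 1 - \<gamma> 0))"
proof -
  have sum_Bs: "(\<Sum>j<N. Bs (partner l j)) = (\<Sum>k<N. Bs k)" if "l < 2" for l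
    using sum.reindex[OF inj_on_partner[OF that], of Bs] partner_image[OF that] by simp
  have sums: "int_multiple pi (\<Sum>j<N. As j + Bs (partner l j) - \<gamma> l)" if "l < 2" for l
    using int_multiple_partner that by (intro int_multiple_sum) auto
  have "real N * (\<gamma> 1 - \<gamma> 0)
      = (\<Sum>j<N. As j + Bs (partner 0 j) - \<gamma> 0) - (\<Sum>j<N. As j + Bs (partner 1 j) - \<gamma> 1)"
    by (simp add: sum.distrib sum_subtractf sum_Bs algebra_simps)
  then show ?thesis
    using int_multiple_diff[OF sums sums] by simp
qed

lemma int_multiple_As_shift:
  assumes "i < N" "j < N" "partner 0 i = partner 1 j"
  shows "int_multiple pi (As j - As i - (\<gamma> 1 - \<gamma> 0))"
proof -
  have "As j - As i - (\<gamma> 1 - \<gamma> 0)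
      = (As j + Bs (partner 1 j) - \<gamma> 1) - (As i + Bs (partner 0 i) - \<gamma> 0)"
    using assms(3) by simp
  moreover have "int_multiple pi (As j + Bs (partner 1 j) - \<gamma> 1)"
    and "int_multiple pi (As i + Bs (partner 0 i) - \<gamma> 0)"
    using int_multiple_partner assms(1,2) by simp_all
  ultimately show ?thesis
    using int_multiple_diff by metis
qed

text \<open>By int_multiple_As_shift, this set contains the orbit of 0 under (partner 1)\<inverse> \<circ> partner 0.\<close>

definition reachable :: "nat set" where
  "reachable = {j. j < N \<and> (\<exists>n::nat. int_multiple pi (As j - As 0 - real n * (\<gamma> 1 - \<gamma> 0)))}"

lemma reachable_subset: "reachable \<subseteq> {..<N}"
  unfolding reachable_def by auto

lemma partner_image_reachable: "partner 0 ` reachable = partner 1 ` reachable"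
proof (rule card_subset_eq)
  show "partner 0 ` reachable \<subseteq> partner 1 ` reachable"
  proof
    fix k assume "k \<in> partner 0 ` reachable"
    then obtain i n where i: "i < N" "k = partner 0 i"
      and n: "int_multiple pi (As i - As 0 - real n * (\<gamma> 1 - \<gamma> 0))"
      unfolding reachable_def by blast
    have "k \<in> partner 1 ` {..<N}"
      using partner_image partner_less i by simp
    then obtain j where j: "j < N" "partner 1 j = k" by auto
    have "int_multiple pi ((As j - As i - (\<gamma> 1 - \<gamma> 0)) + (As i - As 0 - real n * (\<gamma> 1 - \<gamma> 0)))"
      using int_multiple_As_shift[OF i(1) j(1)] i j n by (intro int_multiple_add) auto
    then have "int_multiple pi (As j - As 0 - real (Suc n) * (\<gamma> 1 - \<gamma> 0))"
      by (simp add: algebra_simps)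
    then have "j \<in> reachable"
      unfolding reachable_def using j by blast
    then show "k \<in> partner 1 ` reachable" using j by blast
  qed
  have "card (partner l ` reachable) = card reachable" if "l < 2" for l
    using inj_on_subset[OF inj_on_partner[OF that] reachable_subset] by (rule card_image)
  then show "card (partner 0 ` reachable) = card (partner 1 ` reachable)" by simp
  show "finite (partner 1 ` reachable)"
    using finite_subset[OF reachable_subset] by simp
qed

lemma reachable_eq_if_rank:
  assumes "0 < N" and rank: "vec_space.rank (2 * N) (pairing_mat N partner) = 2 * N - 1"
  shows "reachable = {..<N}"
proof (rule ccontr)
  assume "reachable \<noteq> {..<N}"
  then obtain j where "j < N" "j \<notin> reachable"
    using reachable_subset by blast
  moreover have "0 \<in> reachable"
    using assms(1) unfolding reachable_def by (auto intro: exI[of _ 0])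
  ultimately have "vec_space.rank (2 * N) (pairing_mat N partner) \<le> 2 * N - 2"
    using partner_less inj_on_partner partner_image_reachable reachable_subset
    by (intro pairing_mat_rank_le) auto
  with rank assms(1) show False by simp
qed

lemma evenly_spaced_if_reachable:
  assumes "0 < N" and reach: "reachable = {..<N}"
  shows "evenly_spaced N (As ` {..<N})" and "evenly_spaced N (Bs ` {..<N})"
proof -
  obtain M :: int where M: "real N * (\<gamma> 1 - \<gamma> 0) = pi * of_int M"
    using int_multiple_N_mult_gamma_diff unfolding int_multiple_def by blast
  have As_grid: "\<exists>m::int. int_multiple pi (As j - As 0 - of_int m * pi / real N)" if "j < N" for j
  proof -
    have "j \<in> reachable" using that reach by simp
    then obtain n :: nat where n: "int_multiple pi (As j - As 0 - real n * (\<gamma> 1 - \<gamma> 0))"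
      unfolding reachable_def by blast
    have "of_int (int n * M) * pi / real N = real n * (pi * of_int M) / real N"
      by simp
    also have "\<dots> = real n * (\<gamma> 1 - \<gamma> 0)"
      using assms(1) unfolding M[symmetric] by simp
    finally have eq: "real n * (\<gamma> 1 - \<gamma> 0) = of_int (int n * M) * pi / real N" ..
    from n[unfolded eq] show ?thesis by blast
  qed
  have Bs_grid: "\<exists>m::int. int_multiple pi (Bs k - (\<gamma> 0 - As 0) - of_int m * pi / real N)"
    if "k < N" for k
  proof -
    have "k \<in> partner 0 ` {..<N}"
      using that partner_image[of 0] by simp
    then obtain j where j: "j < N" "k = partner 0 j" by blast
    obtain m :: int where m: "int_multiple pi (As j - As 0 - of_int m * pi / real N)"
      using As_grid[OF j(1)] by blast
    have "int_multiple pi ((As j + Bs k - \<gamma> 0) - (As j - As 0 - of_int m * pi / real N))"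
      using int_multiple_diff[OF int_multiple_partner[OF j(1)] m] j(2) by simp
    then have "int_multiple pi (Bs k - (\<gamma> 0 - As 0) - of_int (- m) * pi / real N)"
      by (simp add: algebra_simps)
    then show ?thesis by blast
  qed
  have card: "card (f ` {..<N}) = N" if "inj_on f {..<N}" for f :: "nat \<Rightarrow> real"
    using card_image[OF that] by simp
  show "evenly_spaced N (As ` {..<N})"
    using assms(1) card[OF inj_As] As_range As_grid
    by (intro evenly_spaced_if_int_multiple[where \<theta> = "As 0"]) auto
  show "evenly_spaced N (Bs ` {..<N})"
    using assms(1) card[OF inj_Bs] Bs_range Bs_grid
    by (intro evenly_spaced_if_int_multiple[where \<theta> = "\<gamma> 0 - As 0"]) auto
qed

end

lemma angle_pairing_if_max_impossible:
  assumes lam: "0 \<le> lam" "lam < pi / 2"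
    and scen: "meas_scenario M1 M2 M3" and imp: "max_impossible lam M1 M2 M3"
    and bij: "bij_betw As {..<N} M1" "bij_betw Bs {..<N} M2" "bij_betw Cs {..<2} M3"
  shows "angle_pairing N As Bs (\<lambda>l. beta lam (Cs l + obit False))"
proof
  have M1: "M1 = As ` {..<N}" and M2: "M2 = Bs ` {..<N}" and M3: "M3 = Cs ` {..<2}"
    using bij by (simp_all add: bij_betw_def)
  show "inj_on As {..<N}" "inj_on Bs {..<N}"
    using bij by (simp_all add: bij_betw_def)
  show "0 \<le> As j \<and> As j < pi" if "j < N" for j
    using scen that unfolding M1 meas_scenario_def by auto
  show "0 \<le> Bs k \<and> Bs k < pi" if "k < N" for k
    using scen that unfolding M2 meas_scenario_def by auto
  show "\<exists>k<N. int_multiple pi (As j + Bs k - beta lam (Cs l + obit False))"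
    if "j < N" "l < 2" for j l
  proof -
    have "As j \<in> M1" "Cs l \<in> M3"
      using that unfolding M1 M3 by simp_all
    then obtain B a b where "B \<in> M2" and "impossible (Bstate lam) (As j) B (Cs l) a b False"
      using imp unfolding max_impossible_def by blast
    then show ?thesis
      using impossible_Bstate_imp_int_multiple[OF lam] unfolding M2 by blast
  qed
qed

lemma N_regular_evenly_spaced:
  assumes "N_regular N lam M1 M2 M3"
  shows "evenly_spaced N M1 \<and> evenly_spaced N M2"
proof (cases "N = 0")
  case True
  with assms have "M1 = {}" "M2 = {}"
    unfolding N_regular_def meas_scenario_def by auto
  with True show ?thesis
    unfolding evenly_spaced_def by simp
next
  case False
  from assms obtain As Bs Cs where lam: "0 \<le> lam" "lam < pi / 2"
    and scen: "meas_scenario M1 M2 M3" and imp: "max_impossible lam M1 M2 M3"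
    and bij: "bij_betw As {..<N} M1" "bij_betw Bs {..<N} M2" "bij_betw Cs {..<2} M3"
    and rank: "max_rank lam N As Bs Cs"
    unfolding N_regular_def by blast
  define \<gamma> where "\<gamma> l = beta lam (Cs l + obit False)" for l
  interpret angle_pairing N As Bs \<gamma>
    unfolding \<gamma>_def by (rule angle_pairing_if_max_impossible[OF lam scen imp bij])
  have "Kidx lam N As Bs Cs j l False = partner l j" for j l
    unfolding Kidx_def partner_def \<gamma>_def int_multiple_def ..
  then have "coeff_mat lam N As Bs Cs False False = pairing_mat N partner"
    by (simp add: coeff_mat_eq_pairing_mat)
  with rank have "vec_space.rank (2 * N) (pairing_mat N partner) = 2 * N - 1"
    unfolding max_rank_def by metis
  with False have "reachable = {..<N}"
    by (simp add: reachable_eq_if_rank)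
  moreover have "M1 = As ` {..<N}" "M2 = Bs ` {..<N}"
    using bij by (simp_all add: bij_betw_def)
  ultimately show ?thesis
    using evenly_spaced_if_reachable False by simp
qed

section \<open>Normal form up to equivalence\<close>

definition phase_gate :: "real \<Rightarrow> bool \<Rightarrow> bool \<Rightarrow> complex" where
  "phase_gate \<alpha> x y = (if x = y then (if x then cis \<alpha> else 1) else 0)"

lemma unitary2_phase_gate: "unitary2 (phase_gate \<alpha>)"
  unfolding unitary2_def sum_UNIV_bool phase_gate_def by (auto simp: cis_cnj cis_mult)

lemma conjop_phase_gate: "conjop (phase_gate \<alpha>) (Emat \<phi>) = Emat (\<phi> + \<alpha>)"
proof (intro ext)
  fix x y
  show "conjop (phase_gate \<alpha>) (Emat \<phi>) x y = Emat (\<phi> + \<alpha>) x y"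
    unfolding conjop_def sum_UNIV_bool phase_gate_def Emat_def
    by (cases x; cases y) (simp_all add: cis_cnj cis_mult algebra_simps)
qed

lemma rmod_pi_eq_if_cis_eq_pm:
  assumes "cis a = cis b \<or> cis a = - cis b"
  shows "rmod a pi = rmod b pi"
proof -
  from assms have "sin (a - b) = 0"
  proof
    assume "cis a = cis b"
    then have "cos a = cos b" "sin a = sin b" by (metis cis.sel)+
    then show ?thesis by (simp add: sin_diff mult.commute)
  next
    assume "cis a = - cis b"
    then have "cos a = - cos b" "sin a = - sin b" by (metis cis.sel uminus_complex.sel)+
    then show ?thesis by (simp add: sin_diff mult.commute)
  qed
  then show ?thesis
    by (simp add: rmod_eq_iff sin_eq_0_imp_int_multiple)
qed

lemma angle_image_phase_gate: "angle_image (phase_gate \<alpha>) M = (\<lambda>\<phi>. rmod (\<phi> + \<alpha>) pi) ` M"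
proof
  show "angle_image (phase_gate \<alpha>) M \<subseteq> (\<lambda>\<phi>. rmod (\<phi> + \<alpha>) pi) ` M"
  proof
    fix v assume "v \<in> angle_image (phase_gate \<alpha>) M"
    then obtain \<phi> \<phi>' where v: "v = rmod \<phi>' pi" "\<phi> \<in> M"
      and "Emat (\<phi> + \<alpha>) = Emat \<phi>' \<or> Emat (\<phi> + \<alpha>) = (\<lambda>x y. - Emat \<phi>' x y)"
      unfolding angle_image_def conjop_phase_gate by blast
    then have "Emat (\<phi> + \<alpha>) True False = Emat \<phi>' True False
        \<or> Emat (\<phi> + \<alpha>) True False = - Emat \<phi>' True False"
      by auto
    then have "rmod (\<phi> + \<alpha>) pi = rmod \<phi>' pi"
      unfolding Emat_def by (intro rmod_pi_eq_if_cis_eq_pm) simp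
    with v(1) have "v = rmod (\<phi> + \<alpha>) pi" by simp
    with v(2) show "v \<in> (\<lambda>\<phi>. rmod (\<phi> + \<alpha>) pi) ` M" by blast
  qed
  show "(\<lambda>\<phi>. rmod (\<phi> + \<alpha>) pi) ` M \<subseteq> angle_image (phase_gate \<alpha>) M"
    unfolding angle_image_def conjop_phase_gate by blast
qed

lemma apply3_phase_gate_Bstate:
  "apply3 (phase_gate (- \<theta>)) (phase_gate \<theta>) (phase_gate 0) (Bstate lam) = Bstate lam"
proof (intro ext)
  fix x y z
  show "apply3 (phase_gate (- \<theta>)) (phase_gate \<theta>) (phase_gate 0) (Bstate lam) x y z = Bstate lam x y z"
    unfolding apply3_def sum_UNIV_bool phase_gate_def
    by (cases x; cases y; cases z) (simp_all add: Bstate_def cis_mult)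
qed

lemma relabel_id: "relabel id \<psi> = \<psi>"
  unfolding relabel_def by (intro ext) simp

lemma equivalent_phase_gates:
  "equivalent (Bstate lam) (scen M1 M2 M3) (Bstate lam)
    (scen (angle_image (phase_gate (- \<theta>)) M1) (angle_image (phase_gate \<theta>) M2)
      (angle_image (phase_gate 0) M3))"
proof -
  define U where "U i = (if i = 0 then phase_gate (- \<theta>) else if i = 1 then phase_gate \<theta> else phase_gate 0)"
    for i :: nat
  have "angle_image (U i) (scen M1 M2 M3 (inv_into UNIV id i))
      = scen (angle_image (phase_gate (- \<theta>)) M1) (angle_image (phase_gate \<theta>) M2)
          (angle_image (phase_gate 0) M3) i" if "i < 3" for i
  proof -
    from that have "i = 0 \<or> i = 1 \<or> i = 2" by auto
    then show ?thesis unfolding scen_def U_def by (auto simp: inv_id)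
  qed
  moreover have "apply3 (U 0) (U 1) (U 2) (relabel id (Bstate lam)) = Bstate lam"
    unfolding U_def relabel_id by (simp add: apply3_phase_gate_Bstate)
  moreover have "unitary2 (U i)" for i
    unfolding U_def by (simp add: unitary2_phase_gate)
  ultimately show ?thesis
    unfolding equivalent_def using permutes_id by blast
qed

lemma angle_image_phase_gate_grid:
  "angle_image (phase_gate \<alpha>) ((\<lambda>k. rmod (\<theta> + real k * pi / real N) pi) ` {..<N})
    = (\<lambda>k. rmod (real k * pi / real N + (\<theta> + \<alpha>)) pi) ` {..<N}"
proof -
  have "rmod (rmod (\<theta> + real k * pi / real N) pi + \<alpha>) pi = rmod (real k * pi / real N + (\<theta> + \<alpha>)) pi"
    for k
    using rmod_rmod_add[OF pi_gt_zero, of "\<theta> + real k * pi / real N" \<alpha>]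
    by (simp add: algebra_simps)
  then show ?thesis
    by (simp add: angle_image_phase_gate image_image)
qed

lemma equivalent_normal_form_if_evenly_spaced:
  assumes "evenly_spaced N M1" "evenly_spaced N M2"
  shows "\<exists>mu. 0 \<le> mu \<and> mu < pi \<and> (\<exists>M3'.
    equivalent (Bstate lam) (scen M1 M2 M3) (Bstate lam)
      (scen ((\<lambda>k. real k * pi / real N) ` {..<N})
            ((\<lambda>k. rmod (real k * pi / real N + mu) pi) ` {..<N}) M3'))"
proof -
  obtain \<theta>1 \<theta>2 where
    \<theta>1: "M1 = (\<lambda>k. rmod (\<theta>1 + real k * pi / real N) pi) ` {..<N}" and
    \<theta>2: "M2 = (\<lambda>k. rmod (\<theta>2 + real k * pi / real N) pi) ` {..<N}"
    using assms unfolding evenly_spaced_def by blast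
  define mu where "mu = rmod (\<theta>1 + \<theta>2) pi"
  have "rmod (real k * pi / real N) pi = real k * pi / real N" if "k < N" for k
    using that by (intro rmod_eq_self) (simp_all add: divide_less_eq)
  then have "angle_image (phase_gate (- \<theta>1)) M1 = (\<lambda>k. real k * pi / real N) ` {..<N}"
    unfolding \<theta>1 angle_image_phase_gate_grid by simp
  moreover have "rmod (real k * pi / real N + (\<theta>2 + \<theta>1)) pi = rmod (real k * pi / real N + mu) pi"
    for k
    unfolding mu_def using rmod_rmod_add[OF pi_gt_zero, of "\<theta>1 + \<theta>2" "real k * pi / real N"]
    by (simp add: add.commute add.left_commute)
  then have "angle_image (phase_gate \<theta>1) M2 = (\<lambda>k. rmod (real k * pi / real N + mu) pi) ` {..<N}"
    unfolding \<theta>2 angle_image_phase_gate_grid by simp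
  moreover have "0 \<le> mu" "mu < pi"
    unfolding mu_def using rmod_bounds[OF pi_gt_zero] by auto
  ultimately show ?thesis
    using equivalent_phase_gates[of lam M1 M2 M3 \<theta>1] by metis
qed

theorem lemma22:
  fixes N :: nat and lam :: real and M1 M2 M3 :: "real set"
  assumes "N_regular N lam M1 M2 M3"
  shows "evenly_spaced N M1 \<and> evenly_spaced N M2 \<and>
         (\<exists>mu. 0 \<le> mu \<and> mu < pi \<and> (\<exists>M3'.
            equivalent (Bstate lam) (scen M1 M2 M3) (Bstate lam)
              (scen ((\<lambda>k. real k * pi / real N) ` {..<N})
                    ((\<lambda>k. rmod (real k * pi / real N + mu) pi) ` {..<N}) M3')))"
  using N_regular_evenly_spaced[OF assms] equivalent_normal_form_if_evenly_spaced by blast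

end
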